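(* Consider the following permutation model $\mathcal V$ (in $\mathsf{ZFA}$ with choice in the ground). The set of atoms is $A=\bigcup_{n\in\omega}P_n$, where $P_n=\{a_n,b_n,c_n\}$ are pairwise disjoint 3-element sets, each carrying the cyclic order $a_n\to b_n\to c_n\to a_n$. Let $G$ be the group of all permutations $\pi$ of $A$ such that $\pi[P_n]=P_n$ for all $n$ and $\pi$ preserves each cyclic ordering (i.e. $\pi\restriction P_n$ is a power of the 3-cycle $(a_n\,b_n\,c_n)$ for every $n$). Let $\mathcal V$ be the class of hereditarily symmetric sets with respect to finite supports. Let $\mathfrak m=|A|$. Then in $\mathcal V$: $$[\mathfrak m]^2<\mathfrak m^2<\mathrm{seq}^{1-1}(\mathfrak m)<\mathrm{fin}(\mathfrak m).$$
   Context: Permutation model: $\pi\in G$ acts on sets by $\pi x=\{\pi y:y\in x\}$; $\mathrm{Fix}_G(E)=\{\pi\in G:\pi a=a\ \forall a\in E\}$; a set $x$ is symmetric if for some finite $E\subseteq A$, every $\pi\in\mathrm{Fix}_G(E)$ satisfies $\pi x=x$; $\mathcal V$ is the class of hereditarily symmetric sets. For a set $M$: $M^2=M\times M$, $[M]^2$ = 2-element subsets, $\mathrm{seq}^{1-1}(M)$ = finite sequences without repetition, $\mathrm{fin}(M)$ = finite subsets; for $\mathfrak m=|M|$ the corresponding symbols denote cardinalities. $|X|<|Y|$ means an injection $X\to Y$ exists but no bijection. *)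

theory Defs
  imports Main "HOL-Library.Numeral_Type"
begin

text \<open>Atoms: the atom (n, i) with i in Z/3 stands for a_n, b_n, c_n (i = 0, 1, 2);
  P_n = {(n,0),(n,1),(n,2)} with cyclic order i -> i+1.\<close>
type_synonym atom = "nat \<times> 3"

definition Grp :: "(atom \<Rightarrow> atom) set" where
  "Grp = {\<pi>. \<exists>k :: nat \<Rightarrow> 3. \<forall>n i. \<pi> (n, i) = (n, i + k n)}"

definition Fix :: "atom set \<Rightarrow> (atom \<Rightarrow> atom) set" where
  "Fix E = {\<pi> \<in> Grp. \<forall>a\<in>E. \<pi> a = a}"

definition act_set :: "(atom \<Rightarrow> atom) \<Rightarrow> atom set \<Rightarrow> atom set" where
  "act_set \<pi> x = \<pi> ` x"

definition act_pair :: "(atom \<Rightarrow> atom) \<Rightarrow> atom \<times> atom \<Rightarrow> atom \<times> atom" where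
  "act_pair \<pi> p = (\<pi> (fst p), \<pi> (snd p))"

definition act_list :: "(atom \<Rightarrow> atom) \<Rightarrow> atom list \<Rightarrow> atom list" where
  "act_list \<pi> xs = map \<pi> xs"

text \<open>A function f : X -> Y (as a set of pairs) is symmetric, i.e. lies in the
  permutation model, iff it has a finite support E: every pi in Fix E satisfies
  pi f = f, i.e. f (pi x) = pi (f x) for x in X.\<close>
definition symmetric_map ::
  "((atom \<Rightarrow> atom) \<Rightarrow> 'x \<Rightarrow> 'x) \<Rightarrow> ((atom \<Rightarrow> atom) \<Rightarrow> 'y \<Rightarrow> 'y) \<Rightarrow> 'x set \<Rightarrow> ('x \<Rightarrow> 'y) \<Rightarrow> bool" where
  "symmetric_map actX actY X f \<longleftrightarrow>
     (\<exists>E. finite E \<and> (\<forall>\<pi>\<in>Fix E. \<forall>x\<in>X. f (actX \<pi> x) = actY \<pi> (f x)))"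

definition V_le ::
  "'x set \<Rightarrow> ((atom \<Rightarrow> atom) \<Rightarrow> 'x \<Rightarrow> 'x) \<Rightarrow> 'y set \<Rightarrow> ((atom \<Rightarrow> atom) \<Rightarrow> 'y \<Rightarrow> 'y) \<Rightarrow> bool" where
  "V_le X actX Y actY \<longleftrightarrow>
     (\<exists>f. inj_on f X \<and> f ` X \<subseteq> Y \<and> symmetric_map actX actY X f)"

definition V_eqpoll ::
  "'x set \<Rightarrow> ((atom \<Rightarrow> atom) \<Rightarrow> 'x \<Rightarrow> 'x) \<Rightarrow> 'y set \<Rightarrow> ((atom \<Rightarrow> atom) \<Rightarrow> 'y \<Rightarrow> 'y) \<Rightarrow> bool" where
  "V_eqpoll X actX Y actY \<longleftrightarrow>
     (\<exists>f. bij_betw f X Y \<and> symmetric_map actX actY X f)"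

definition V_less ::
  "'x set \<Rightarrow> ((atom \<Rightarrow> atom) \<Rightarrow> 'x \<Rightarrow> 'x) \<Rightarrow> 'y set \<Rightarrow> ((atom \<Rightarrow> atom) \<Rightarrow> 'y \<Rightarrow> 'y) \<Rightarrow> bool" where
  "V_less X actX Y actY \<longleftrightarrow> V_le X actX Y actY \<and> \<not> V_eqpoll X actX Y actY"

end

theory Submission
  imports Defs "HOL-Library.Countable" "HOL-Library.Nat_Bijection"
begin

text \<open>Every permutation in G shifts the atoms cyclically inside their blocks, and for a block n
  that does not meet a support E the rotation of block n lies in Fix E. So a map supported by E
  cannot make an object involve a block outside E that its argument does not involve, and an
  injective such map cannot lose such a block either. This kills the three bijections: the pairs
  of atoms from two fresh blocks taken in either order would both come from 2-sets meeting both
  blocks, which some permutation fixing E maps onto each other; a sequence of three atoms from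
  fresh blocks would come from a pair of only two atoms; and the infinitely many whole blocks,
  which every permutation fixes, would come from the finitely many sequences over the blocks of E.
  The injections are equivariant constructions: a 2-set is ordered by block index and, within a
  block, by the cyclic order; a pair becomes a sequence of length one or two; and a sequence
  becomes the set of the first atoms it has in each block it meets, together with a whole block
  whose index codes the shift-invariant shape of the sequence relative to these anchors.\<close>

lemma num3_cases: "(x::3) = 0 \<or> x = 1 \<or> x = 2"
proof (cases x)
  case (of_int z)
  then have "z = 0 \<or> z = 1 \<or> z = 2" by auto
  then show ?thesis using of_int by auto
qed

lemma finite_nat_set_avoids_tail: "finite (N :: nat set) \<Longrightarrow> \<exists>M. \<forall>n\<ge>M. n \<notin> N"
  using finite_nat_set_iff_bounded[of N] by (meson leD)

subsection \<open>The group as shifts\<close>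

definition shift :: "(nat \<Rightarrow> 3) \<Rightarrow> atom \<Rightarrow> atom" where
  "shift k a = (fst a, snd a + k (fst a))"

lemma fst_shift [simp]: "fst (shift k a) = fst a"
  and snd_shift [simp]: "snd (shift k a) = snd a + k (fst a)"
  by (simp_all add: shift_def)

lemma Grp_eq_range_shift: "Grp = range shift"
  unfolding Grp_def shift_def by (auto intro!: ext)

lemma shift_in_Fix_iff: "shift k \<in> Fix E \<longleftrightarrow> (\<forall>n\<in>fst ` E. k n = 0)"
  unfolding Fix_def Grp_eq_range_shift by (auto simp: prod_eq_iff)

lemma Fix_subset_range_shift: "Fix E \<subseteq> range shift"
  unfolding Fix_def Grp_eq_range_shift by blast

lemma inj_on_shift: "inj_on (shift k) A"
  by (rule inj_onI) (auto simp: prod_eq_iff)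

lemma shift_eq_iff: "shift k a = shift k b \<longleftrightarrow> a = b"
  using inj_on_shift[of k UNIV] by (simp add: inj_eq)

lemma shift_image_block: "shift k ` ({n} \<times> UNIV) = {n} \<times> UNIV"
proof
  show "{n} \<times> UNIV \<subseteq> shift k ` ({n} \<times> UNIV)"
  proof
    fix a :: atom assume "a \<in> {n} \<times> UNIV"
    then have "a = shift k (n, snd a - k n)" by (auto simp: prod_eq_iff)
    then show "a \<in> shift k ` ({n} \<times> UNIV)" by blast
  qed
qed (auto simp: shift_def)

lemma exists_shift_on_two_blocks:
  assumes "fst a \<noteq> fst b" "fst a' = fst a" "fst b' = fst b"
  obtains k where "shift k a = a'" "shift k b = b'" "\<And>n. n \<notin> {fst a, fst b} \<Longrightarrow> k n = 0"
  using assms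
  by (intro that[of "\<lambda>n. if n = fst a then snd a' - snd a else if n = fst b then snd b' - snd b else 0"])
    (auto simp: prod_eq_iff)

definition rot :: "nat \<Rightarrow> atom \<Rightarrow> atom" where
  "rot n = shift (\<lambda>m. if m = n then 1 else 0)"

lemma rot_in_Fix: "n \<notin> fst ` E \<Longrightarrow> rot n \<in> Fix E"
  unfolding rot_def shift_in_Fix_iff by auto

lemma rot_eq_self_iff: "rot n a = a \<longleftrightarrow> fst a \<noteq> n"
  unfolding rot_def by (auto simp: prod_eq_iff)

subsection \<open>Supports and moved blocks\<close>

definition supports ::
  "atom set \<Rightarrow> ((atom \<Rightarrow> atom) \<Rightarrow> 'x \<Rightarrow> 'x) \<Rightarrow> ((atom \<Rightarrow> atom) \<Rightarrow> 'y \<Rightarrow> 'y) \<Rightarrow>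
    'x set \<Rightarrow> ('x \<Rightarrow> 'y) \<Rightarrow> bool"
  where "supports E actX actY X f \<longleftrightarrow>
    (\<forall>\<pi>\<in>Fix E. \<forall>x\<in>X. f (actX \<pi> x) = actY \<pi> (f x))"

lemma symmetric_map_iff_supports:
  "symmetric_map actX actY X f \<longleftrightarrow> (\<exists>E. finite E \<and> supports E actX actY X f)"
  by (simp add: symmetric_map_def supports_def)

lemma symmetric_map_if_shift_equivariant:
  assumes "\<And>k x. x \<in> X \<Longrightarrow> f (actX (shift k) x) = actY (shift k) (f x)"
  shows "symmetric_map actX actY X f"
  unfolding symmetric_map_def using Fix_subset_range_shift assms by (intro exI[of _ "{}"]) blast

definition moved_blocks :: "((atom \<Rightarrow> atom) \<Rightarrow> 'x \<Rightarrow> 'x) \<Rightarrow> 'x \<Rightarrow> nat set" where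
  "moved_blocks act x = {n. act (rot n) x \<noteq> x}"

lemma moved_blocks_pair: "moved_blocks act_pair p = {fst (fst p), fst (snd p)}"
proof -
  have "act_pair (rot n) p = p \<longleftrightarrow> rot n (fst p) = fst p \<and> rot n (snd p) = snd p" for n
    by (cases p) (simp add: act_pair_def)
  then show ?thesis by (auto simp: moved_blocks_def rot_eq_self_iff)
qed

lemma moved_blocks_list: "moved_blocks act_list xs = fst ` set xs"
  using map_eq_conv[of _ xs "\<lambda>x. x"] by (auto simp: moved_blocks_def act_list_def rot_eq_self_iff)

lemma moved_blocks_set_subset: "moved_blocks act_set s \<subseteq> fst ` s"
proof
  fix n assume "n \<in> moved_blocks act_set s"
  then have "rot n ` s \<noteq> id ` s" by (simp add: moved_blocks_def act_set_def)
  then show "n \<in> fst ` s" using image_cong[of s s "rot n" id] by (auto simp: rot_eq_self_iff)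
qed

lemma moved_blocks_block: "moved_blocks act_set ({n} \<times> UNIV) = {}"
  by (simp add: moved_blocks_def act_set_def rot_def shift_image_block)

lemma moved_blocks_image_subset:
  assumes "supports E actX actY X f" "x \<in> X"
  shows "moved_blocks actY (f x) \<subseteq> moved_blocks actX x \<union> fst ` E"
proof
  fix n assume moved: "n \<in> moved_blocks actY (f x)"
  show "n \<in> moved_blocks actX x \<union> fst ` E"
  proof (rule ccontr)
    assume "n \<notin> moved_blocks actX x \<union> fst ` E"
    then have "actX (rot n) x = x" "rot n \<in> Fix E" by (auto simp: moved_blocks_def intro: rot_in_Fix)
    then have "actY (rot n) (f x) = f x" using assms unfolding supports_def by metis
    then show False using moved by (simp add: moved_blocks_def)
  qed
qed

lemma moved_blocks_subset_image:
  assumes "supports E actX actY X f" "inj_on f X" "x \<in> X" "\<And>n. actX (rot n) x \<in> X"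
  shows "moved_blocks actX x \<subseteq> moved_blocks actY (f x) \<union> fst ` E"
proof
  fix n assume moved: "n \<in> moved_blocks actX x"
  show "n \<in> moved_blocks actY (f x) \<union> fst ` E"
  proof (rule ccontr)
    assume "n \<notin> moved_blocks actY (f x) \<union> fst ` E"
    then have "actY (rot n) (f x) = f x" "rot n \<in> Fix E" by (auto simp: moved_blocks_def intro: rot_in_Fix)
    then have "f (actX (rot n) x) = f x" using assms(1,3) unfolding supports_def by metis
    then have "actX (rot n) x = x" using assms(2-4) by (meson inj_onD)
    then show False using moved by (simp add: moved_blocks_def)
  qed
qed

subsection \<open>2-sets and pairs\<close>

definition oriented :: "atom \<times> atom \<Rightarrow> bool" where
  "oriented p \<longleftrightarrow>
    fst (fst p) < fst (snd p) \<or> fst (fst p) = fst (snd p) \<and> snd (snd p) = snd (fst p) + 1"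

lemma oriented_swap_iff:
  assumes "x \<noteq> y" shows "oriented (y, x) \<longleftrightarrow> \<not> oriented (x, y)"
proof (cases "fst x = fst y")
  case True
  with assms have "snd x \<noteq> snd y" by (auto simp: prod_eq_iff)
  then have "snd x = snd y + 1 \<longleftrightarrow> snd y \<noteq> snd x + 1"
    using num3_cases[of "snd x"] num3_cases[of "snd y"] by (elim disjE) simp_all
  with True show ?thesis by (simp add: oriented_def)
qed (auto simp: oriented_def)

lemma oriented_shift_iff: "oriented (shift k a, shift k b) \<longleftrightarrow> oriented (a, b)"
  by (auto simp: oriented_def)

definition orient :: "atom set \<Rightarrow> atom \<times> atom" where
  "orient s = (THE p. oriented p \<and> {fst p, snd p} = s)"

lemma ex1_oriented:
  assumes "card s = 2" shows "\<exists>!p. oriented p \<and> {fst p, snd p} = s"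
proof -
  obtain x y where s: "s = {x, y}" and xy: "x \<noteq> y" using assms unfolding card_2_iff by blast
  have swap: "oriented (y, x) \<longleftrightarrow> \<not> oriented (x, y)" using xy by (rule oriented_swap_iff)
  have pairs: "{fst p, snd p} = s \<longleftrightarrow> p = (x, y) \<or> p = (y, x)" for p
    unfolding s by (cases p) (simp add: doubleton_eq_iff)
  let ?p = "if oriented (x, y) then (x, y) else (y, x)"
  show ?thesis
  proof (rule ex1I[of _ ?p])
    show "oriented ?p \<and> {fst ?p, snd ?p} = s" using swap pairs by simp
    show "p = ?p" if "oriented p \<and> {fst p, snd p} = s" for p using that pairs swap by auto
  qed
qed

lemma orient_spec: "card s = 2 \<Longrightarrow> oriented (orient s) \<and> {fst (orient s), snd (orient s)} = s"
  unfolding orient_def by (rule theI') (rule ex1_oriented)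

lemma orient_shift:
  assumes "card s = 2" shows "orient (shift k ` s) = act_pair (shift k) (orient s)"
  unfolding orient_def[of "shift k ` s"]
proof (rule the1_equality)
  show "\<exists>!p. oriented p \<and> {fst p, snd p} = shift k ` s"
    using assms by (intro ex1_oriented) (simp add: card_image inj_on_shift)
  have "shift k ` s = {shift k (fst (orient s)), shift k (snd (orient s))}"
    using orient_spec[OF assms] by (metis image_empty image_insert)
  then show "oriented (act_pair (shift k) (orient s)) \<and>
      {fst (act_pair (shift k) (orient s)), snd (act_pair (shift k) (orient s))} = shift k ` s"
    using orient_spec[OF assms] by (simp add: act_pair_def oriented_shift_iff)
qed

lemma two_subsets_le_pairs:
  "V_le {x :: atom set. card x = 2} act_set (UNIV :: (atom \<times> atom) set) act_pair"
  unfolding V_le_def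
proof (intro exI conjI)
  show "inj_on orient {x. card x = 2}"
    by (rule inj_onI) (metis orient_spec mem_Collect_eq)
  show "symmetric_map act_set act_pair {x. card x = 2} orient"
    by (rule symmetric_map_if_shift_equivariant) (simp add: act_set_def orient_shift)
qed simp

lemma not_two_subsets_eqpoll_pairs:
  "\<not> V_eqpoll {x :: atom set. card x = 2} act_set (UNIV :: (atom \<times> atom) set) act_pair"
proof
  assume "V_eqpoll {x :: atom set. card x = 2} act_set (UNIV :: (atom \<times> atom) set) act_pair"
  then obtain f E where bij: "bij_betw f {x :: atom set. card x = 2} UNIV" and "finite E"
    and supp: "supports E act_set act_pair {x. card x = 2} f"
    unfolding V_eqpoll_def symmetric_map_iff_supports by blast
  have preimage: "\<exists>x y. s = {x, y} \<and> fst x = n \<and> fst y = m"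
    if s: "card s = 2" "f s = ((n, 0), (m, 0))" and nm: "n \<notin> fst ` E" "m \<notin> fst ` E" "n \<noteq> m"
    for s n m
  proof -
    have "{n, m} \<subseteq> fst ` s"
      using moved_blocks_image_subset[OF supp, of s] moved_blocks_set_subset[of s]
        moved_blocks_pair[of "f s"] s nm by auto
    then obtain x y where xy: "x \<in> s" "y \<in> s" "fst x = n" "fst y = m" by auto
    with nm(3) have "x \<noteq> y" by auto
    then have "card {x, y} = card s" using s(1) by simp
    moreover have "finite s" using s(1) by (simp add: card_ge_0_finite)
    ultimately have "s = {x, y}" using card_subset_eq[of s "{x, y}"] xy(1,2) by auto
    with xy show ?thesis by blast
  qed
  obtain M where M: "\<forall>n\<ge>M. n \<notin> fst ` E"
    using finite_nat_set_avoids_tail[of "fst ` E"] \<open>finite E\<close> by blast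
  define n m where "n = M" and "m = Suc M"
  have nm: "n \<notin> fst ` E" "m \<notin> fst ` E" "n \<noteq> m" using M by (auto simp: n_def m_def)
  obtain s t where s: "card s = 2" "f s = ((n, 0), (m, 0))" and t: "card t = 2" "f t = ((m, 0), (n, 0))"
    using bij_betw_imp_surj_on[OF bij] by (metis (mono_tags, lifting) UNIV_I imageE mem_Collect_eq)
  obtain x y where xy: "s = {x, y}" "fst x = n" "fst y = m" using preimage[OF s nm] by blast
  obtain x' y' where x'y': "t = {x', y'}" "fst x' = m" "fst y' = n" using preimage[OF t nm(2,1)] nm(3) by blast
  obtain k where k: "shift k x = y'" "shift k y = x'" "\<And>j. j \<notin> {n, m} \<Longrightarrow> k j = 0"
    using exists_shift_on_two_blocks[of x y y' x'] xy x'y' nm(3) by metis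
  have "shift k \<in> Fix E" unfolding shift_in_Fix_iff using k(3) nm(1,2) by (metis empty_iff insert_iff)
  moreover have "shift k ` s = t" using xy(1) x'y'(1) k(1,2) by auto
  ultimately have "f t = act_pair (shift k) (f s)" using supp s(1) by (auto simp: supports_def act_set_def)
  then have "fst (fst (f t)) = n" using s(2) by (simp add: act_pair_def)
  then show False using t(2) nm(3) by simp
qed

subsection \<open>Pairs and injective sequences\<close>

lemma pairs_le_distinct_lists:
  "V_le (UNIV :: (atom \<times> atom) set) act_pair {xs :: atom list. distinct xs} act_list"
proof -
  define f :: "atom \<times> atom \<Rightarrow> atom list" where "f p = remdups [fst p, snd p]" for p
  have "inj f"
  proof (rule injI)
    fix p q assume "f p = f q"
    then show "p = q" by (simp add: f_def prod_eq_iff split: if_splits)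
  qed
  moreover have "range f \<subseteq> {xs. distinct xs}" by (simp add: f_def image_subset_iff)
  moreover have "symmetric_map act_pair act_list UNIV f"
    by (rule symmetric_map_if_shift_equivariant) (simp add: f_def act_pair_def act_list_def shift_eq_iff)
  ultimately show ?thesis unfolding V_le_def by blast
qed

lemma not_pairs_eqpoll_distinct_lists:
  "\<not> V_eqpoll (UNIV :: (atom \<times> atom) set) act_pair {xs :: atom list. distinct xs} act_list"
proof
  assume "V_eqpoll (UNIV :: (atom \<times> atom) set) act_pair {xs :: atom list. distinct xs} act_list"
  then obtain f E where bij: "bij_betw f (UNIV :: (atom \<times> atom) set) {xs. distinct xs}"
    and "finite E" and supp: "supports E act_pair act_list UNIV f"
    unfolding V_eqpoll_def symmetric_map_iff_supports by blast
  obtain M where M: "\<forall>n\<ge>M. n \<notin> fst ` E"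
    using finite_nat_set_avoids_tail[of "fst ` E"] \<open>finite E\<close> by blast
  have "[(M, 0), (Suc M, 0), (Suc (Suc M), 0)] \<in> f ` UNIV"
    using bij_betw_imp_surj_on[OF bij] by simp
  then obtain p where p: "f p = [(M, 0), (Suc M, 0), (Suc (Suc M), 0)]" by (metis rangeE)
  have "moved_blocks act_list (f p) \<subseteq> moved_blocks act_pair p \<union> fst ` E"
    using supp by (rule moved_blocks_image_subset) simp
  then have "{M, Suc M, Suc (Suc M)} \<subseteq> {fst (fst p), fst (snd p)} \<union> fst ` E"
    unfolding p moved_blocks_list moved_blocks_pair by simp
  moreover have "M \<notin> fst ` E" "Suc M \<notin> fst ` E" "Suc (Suc M) \<notin> fst ` E" using M by simp_all
  ultimately have "{M, Suc M, Suc (Suc M)} \<subseteq> {fst (fst p), fst (snd p)}" by blast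
  then have "card {M, Suc M, Suc (Suc M)} \<le> card {fst (fst p), fst (snd p)}"
    by (rule card_mono[rotated]) simp
  also have "\<dots> \<le> 2" by (rule card_insert_le_m1) simp_all
  finally show False by simp
qed

subsection \<open>Injective sequences and finite sets\<close>

definition anchor :: "atom list \<Rightarrow> nat \<Rightarrow> 3" where
  "anchor L n = snd (hd (filter (\<lambda>a. fst a = n) L))"

definition shape :: "atom list \<Rightarrow> atom list" where
  "shape L = map (\<lambda>a. (fst a, snd a - anchor L (fst a))) L"

text \<open>The first component only serves to make the code exceed every block met by L.\<close>
definition shape_code :: "atom list \<Rightarrow> nat" where
  "shape_code L = prod_encode (Suc (sum_list (map fst L)), to_nat (shape L))"

definition encode :: "atom list \<Rightarrow> atom set" where
  "encode L = (\<lambda>n. (n, anchor L n)) ` fst ` set L \<union> {shape_code L} \<times> UNIV"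

lemma map_fst_shape: "map fst (shape L) = map fst L"
  by (simp add: shape_def)

lemma shape_inverse: "map (\<lambda>a. (fst a, snd a + anchor L (fst a))) (shape L) = L"
  unfolding shape_def map_map o_def by (rule map_idI) simp

lemma block_less_shape_code:
  assumes "x \<in> set L" shows "fst x < shape_code L"
proof -
  have "fst x \<le> sum_list (map fst L)" using assms by (simp add: member_le_sum_list)
  also have "\<dots> < Suc (sum_list (map fst L))" by simp
  also have "\<dots> \<le> shape_code L" unfolding shape_code_def by (rule le_prod_encode_1)
  finally show ?thesis .
qed

lemma anchor_shift:
  assumes "n \<in> fst ` set L" shows "anchor (map (shift k) L) n = anchor L n + k n"
proof -
  have ne: "filter (\<lambda>a. fst a = n) L \<noteq> []" using assms by (auto simp: filter_empty_conv)
  then have "fst (hd (filter (\<lambda>a. fst a = n) L)) = n" using hd_in_set by force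
  with ne show ?thesis by (simp add: anchor_def filter_map o_def hd_map)
qed

lemma shape_shift: "shape (map (shift k) L) = shape L"
  unfolding shape_def map_map o_def by (rule map_cong) (simp_all add: anchor_shift)

lemma encode_shift: "encode (map (shift k) L) = shift k ` encode L"
proof -
  have "shape_code (map (shift k) L) = shape_code L"
    by (simp add: shape_code_def shape_shift o_def)
  moreover have "(\<lambda>n. (n, anchor (map (shift k) L) n)) ` fst ` set L =
      shift k ` (\<lambda>n. (n, anchor L n)) ` fst ` set L"
    unfolding image_image by (rule image_cong) (simp_all add: anchor_shift shift_def)
  ultimately show ?thesis by (simp add: encode_def image_Un shift_image_block image_image)
qed

lemma block_subset_encode_iff: "{n} \<times> UNIV \<subseteq> encode L \<longleftrightarrow> n = shape_code L"
proof
  assume block: "{n} \<times> UNIV \<subseteq> encode L"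
  show "n = shape_code L"
  proof (rule ccontr)
    assume n: "n \<noteq> shape_code L"
    have "anchor L n = i" for i
    proof -
      have "(n, i) \<in> encode L" using block by auto
      with n show ?thesis by (auto simp: encode_def)
    qed
    then show False using zero_neq_one[where 'a=3] by metis
  qed
qed (simp add: encode_def)

lemma anchor_in_encode_iff:
  assumes "n \<in> fst ` set L" shows "(n, i) \<in> encode L \<longleftrightarrow> i = anchor L n"
proof -
  have "n \<noteq> shape_code L" using assms block_less_shape_code by fastforce
  with assms show ?thesis by (auto simp: encode_def)
qed

lemma inj_encode: "inj encode"
proof (rule injI)
  fix L L' assume eq: "encode L = encode L'"
  then have "shape_code L = shape_code L'" by (metis block_subset_encode_iff)
  then have shapes: "shape L = shape L'" by (simp add: shape_code_def)
  then have blocks: "fst ` set (shape L) = fst ` set L" "fst ` set L = fst ` set L'"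
    by (metis map_fst_shape set_map)+
  have "anchor L n = anchor L' n" if "n \<in> fst ` set L" for n
    using that eq blocks(2) anchor_in_encode_iff by metis
  with blocks(1) have "map (\<lambda>a. (fst a, snd a + anchor L (fst a))) (shape L) =
      map (\<lambda>a. (fst a, snd a + anchor L' (fst a))) (shape L')"
    unfolding shapes[symmetric] by (intro map_cong) auto
  then show "L = L'" by (simp only: shape_inverse)
qed

lemma distinct_lists_le_finite_sets:
  "V_le {xs :: atom list. distinct xs} act_list {x :: atom set. finite x} act_set"
  unfolding V_le_def
proof (intro exI conjI)
  show "inj_on encode {xs. distinct xs}" using inj_encode by (rule inj_on_subset) simp
  show "encode ` {xs. distinct xs} \<subseteq> {x. finite x}" by (auto simp: encode_def)
  show "symmetric_map act_list act_set {xs. distinct xs} encode"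
    by (rule symmetric_map_if_shift_equivariant) (simp add: act_list_def act_set_def encode_shift)
qed

lemma not_distinct_lists_eqpoll_finite_sets:
  "\<not> V_eqpoll {xs :: atom list. distinct xs} act_list {x :: atom set. finite x} act_set"
proof
  assume "V_eqpoll {xs :: atom list. distinct xs} act_list {x :: atom set. finite x} act_set"
  then obtain f E where bij: "bij_betw f {xs :: atom list. distinct xs} {x. finite x}"
    and "finite E" and supp: "supports E act_list act_set {xs. distinct xs} f"
    unfolding V_eqpoll_def symmetric_map_iff_supports by blast
  have surj: "f ` {xs. distinct xs} = {x. finite x}" using bij by (rule bij_betw_imp_surj_on)
  have "\<exists>L. distinct L \<and> f L = {n} \<times> UNIV" for n
  proof -
    have "{n} \<times> UNIV \<in> f ` {xs. distinct xs}" unfolding surj by simp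
    then show ?thesis by auto
  qed
  then obtain g where g: "\<And>n. distinct (g n)" "\<And>n. f (g n) = {n} \<times> UNIV" by metis
  have g_blocks: "set (g n) \<subseteq> fst ` E \<times> UNIV" for n
  proof -
    have "moved_blocks act_list (g n) \<subseteq> moved_blocks act_set (f (g n)) \<union> fst ` E"
      using supp bij_betw_imp_inj_on[OF bij]
      by (rule moved_blocks_subset_image) (simp_all add: g(1) act_list_def distinct_map rot_def inj_on_shift)
    then have "fst ` set (g n) \<subseteq> fst ` E" by (simp add: g(2) moved_blocks_list moved_blocks_block)
    then show ?thesis by force
  qed
  have "inj g"
  proof (rule injI)
    fix a b assume "g a = g b"
    then have "{a} \<times> (UNIV :: 3 set) = {b} \<times> UNIV" using g(2) by metis
    then show "a = b" by auto
  qed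
  have "finite {xs. set xs \<subseteq> fst ` E \<times> (UNIV :: 3 set) \<and> distinct xs}"
    using \<open>finite E\<close> by (intro finite_subset_distinct) simp
  moreover have "range g \<subseteq> {xs. set xs \<subseteq> fst ` E \<times> UNIV \<and> distinct xs}"
    using g(1) g_blocks by blast
  ultimately have "finite (range g)" by (rule finite_subset[rotated])
  then have "finite (UNIV :: nat set)" using \<open>inj g\<close> by (rule finite_imageD)
  then show False by simp
qed

theorem mainTheorem11:
  shows "V_less {x :: atom set. card x = 2} act_set (UNIV :: (atom \<times> atom) set) act_pair
       \<and> V_less (UNIV :: (atom \<times> atom) set) act_pair {xs :: atom list. distinct xs} act_list
       \<and> V_less {xs :: atom list. distinct xs} act_list {x :: atom set. finite x} act_set"
  unfolding V_less_def
  using two_subsets_le_pairs not_two_subsets_eqpoll_pairs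
    pairs_le_distinct_lists not_pairs_eqpoll_distinct_lists
    distinct_lists_le_finite_sets not_distinct_lists_eqpoll_finite_sets
  by blast

end
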